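(* For every $\zeta=\sum_{j=1}^k x_je_j\in E_k$ and every $t\in\mathbb{C}$ with $t\neq\xi_u$ for all $u=1,\ldots,m$ (where $\xi_u=f_u(\zeta)$), the element $te_1-\zeta$ is invertible in $\mathbb{A}_n^m$ and $$(te_1-\zeta)^{-1}=\sum_{u=1}^m\frac{1}{t-\xi_u}\,I_u+\sum_{s=m+1}^{n}\sum_{r=2}^{s-m+1}\frac{Q_{r,s}}{(t-\xi_{u_s})^r}\,I_s,$$ where the coefficients $Q_{r,s}$ are given recursively by $$Q_{2,s}=T_s,\qquad Q_{r,s}=\sum_{q=r+m-2}^{s-1}Q_{r-1,q}\,B_{q,s},\quad r=3,4,\ldots,s-m+1,$$ with $$T_s:=\sum_{j=2}^k x_j a_{js},\qquad B_{q,s}:=\sum_{p=m+1}^{s-1}T_p\,\Upsilon^{p}_{q,s},$$ and $u_s$ is the index from multiplication rule 3.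
   Context: Fix integers $1\le m\le n$. $\mathbb{A}_n^m$ is an $n$-dimensional commutative associative algebra with unit over $\mathbb{C}$ having a basis $\{I_r\}_{r=1}^n$ with the multiplication rules: (1) for $r,s\in\{1,\ldots,m\}$: $I_rI_s=0$ if $r\ne s$ and $I_rI_r=I_r$; (2) for $r,s\in\{m+1,\ldots,n\}$: $I_rI_s=\sum_{p=\max\{r,s\}+1}^n\Upsilon^s_{r,p}I_p$ with structure constants $\Upsilon^s_{r,p}\in\mathbb{C}$ (so $\Upsilon^{p}_{q,s}$ is the coefficient of $I_s$ in $I_qI_p$); (3) for each $s\in\{m+1,\ldots,n\}$ there is a unique $u_s\in\{1,\ldots,m\}$ such that for all $r\in\{1,\ldots,m\}$: $I_rI_s=I_s$ if $r=u_s$ and $I_rI_s=0$ if $r\ne u_s$. The unit is $1=\sum_{u=1}^mI_u$. For $u=1,\ldots,m$, $f_u:\mathbb{A}_n^m\to\mathbb{C}$ is the linear functional $f_u(\sum_r\lambda_rI_r)=\lambda_u$ (it is continuous and multiplicative). Let $2\le k\le 2n$ and let $e_1=1=\sum_{r=1}^mI_r$, $e_j=\sum_{r=1}^n a_{jr}I_r$ ($a_{jr}\in\mathbb{C}$, $j=2,\ldots,k$) be linearly independent over $\mathbb{R}$. $E_k=\{\zeta=\sum_{j=1}^kx_je_j: x_j\in\mathbb{R}\}$, and $\xi_u:=f_u(\zeta)=x_1+\sum_{j=2}^kx_ja_{ju}$. *)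

theory Defs
  imports Complex_Main
begin

text \<open>Elements of A_n^m are coordinate functions  nat => complex  w.r.t. the basis I_1..I_n;
  coordinates outside 1..n are 0.  Ups q p s is the structure constant Upsilon^p_{q,s}
  (coefficient of I_s in I_q I_p); us s is the index u_s of rule (3).\<close>

definition sc :: "nat \<Rightarrow> nat \<Rightarrow> (nat \<Rightarrow> nat \<Rightarrow> nat \<Rightarrow> complex) \<Rightarrow> (nat \<Rightarrow> nat)
    \<Rightarrow> nat \<Rightarrow> nat \<Rightarrow> nat \<Rightarrow> complex" where
  "sc m n Ups us r s p =
    (if p \<notin> {1..n} then 0
     else if r \<le> m \<and> s \<le> m then (if r = s \<and> p = r then 1 else 0)
     else if m < r \<and> m < s then (if max r s < p then Ups r s p else 0)
     else if r \<le> m then (if r = us s \<and> p = s then 1 else 0)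
     else (if s = us r \<and> p = r then 1 else 0))"

definition amult :: "nat \<Rightarrow> nat \<Rightarrow> (nat \<Rightarrow> nat \<Rightarrow> nat \<Rightarrow> complex) \<Rightarrow> (nat \<Rightarrow> nat)
    \<Rightarrow> (nat \<Rightarrow> complex) \<Rightarrow> (nat \<Rightarrow> complex) \<Rightarrow> (nat \<Rightarrow> complex)" where
  "amult m n Ups us a b =
    (\<lambda>p. \<Sum>r\<in>{1..n}. \<Sum>s\<in>{1..n}. a r * b s * sc m n Ups us r s p)"

definition aone :: "nat \<Rightarrow> nat \<Rightarrow> complex" where
  "aone m = (\<lambda>r. if 1 \<le> r \<and> r \<le> m then 1 else 0)"

definition basisI :: "nat \<Rightarrow> nat \<Rightarrow> complex" where
  "basisI r = (\<lambda>p. if p = r then 1 else 0)"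

definition evec :: "nat \<Rightarrow> nat \<Rightarrow> (nat \<Rightarrow> nat \<Rightarrow> complex) \<Rightarrow> nat \<Rightarrow> nat \<Rightarrow> complex" where
  "evec m n a j = (if j = 1 then aone m else (\<lambda>r. if r \<in> {1..n} then a j r else 0))"

fun Qc :: "(nat \<Rightarrow> complex) \<Rightarrow> (nat \<Rightarrow> nat \<Rightarrow> complex) \<Rightarrow> nat \<Rightarrow> nat \<Rightarrow> nat \<Rightarrow> complex" where
  "Qc T B m 0 s = 0"
| "Qc T B m (Suc 0) s = 0"
| "Qc T B m (Suc (Suc 0)) s = T s"
| "Qc T B m (Suc (Suc (Suc r))) s =
     (\<Sum>q = r + m + 1..s - 1. Qc T B m (Suc (Suc r)) q * B q s)"

end

theory Submission
  imports Defs
begin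

text \<open>On the coordinates I_1, ..., I_m the algebra is a direct product of copies of C, so there
  the inverse of t e_1 - \<zeta> is 1/(t - \<xi>_u). A coordinate I_s with s > m lives over the idempotent
  I_{u_s}, and associativity forces the coefficient Upsilon^q_{r,p} of I_p in I_r I_q to vanish
  unless u_r = u_p. Comparing the I_s-coefficients of R (t e_1 - \<zeta>) = 1 then yields, with
  L = t - \<xi>_{u_s}, the triangular system
  L R_s = T_s / L + sum_{q<s} R_q B_{q,s},
  and the recursion defining Q_{r,s} is exactly this system read off coefficientwise in powers
  of 1/L.\<close>

lemma basisI_apply_self [simp]: "basisI r r = 1"
  by (simp add: basisI_def)

lemma basisI_apply_other [simp]: "q \<noteq> r \<Longrightarrow> basisI r q = 0"
  by (simp add: basisI_def)

lemma sum_mult_basisI: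
  assumes "finite S"
  shows "(\<Sum>s\<in>S. c s * basisI s p) = (if p \<in> S then c p else 0)"
proof -
  have "(\<lambda>s. c s * basisI s p) = (\<lambda>s. if p = s then c s else 0)"
    by (auto simp: basisI_def)
  then show ?thesis using assms by (simp only:) simp
qed

lemma sum_basisI_mult:
  assumes "finite S"
  shows "(\<Sum>q\<in>S. basisI r q * f q) = (if r \<in> S then f r else 0)"
proof -
  have "(\<lambda>q. basisI r q * f q) = (\<lambda>q. if q = r then f q else 0)"
    by (auto simp: basisI_def)
  then show ?thesis using assms by (simp only:) simp
qed

lemma sum_triangle_swap:
  fixes G :: "nat \<Rightarrow> nat \<Rightarrow> 'a::comm_monoid_add"
  assumes "m < p"
  shows "(\<Sum>r = m+1..p-1. \<Sum>j = 2..r-m+1. G j r) = (\<Sum>j = 2..p-m. \<Sum>q = j+m-1..p-1. G j q)"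
proof -
  have "(\<Sum>r = m+1..p-1. \<Sum>j = 2..r-m+1. G j r)
      = (\<Sum>r\<in>{m+1..p-1}. \<Sum>j\<in>{j. j \<in> {2..p-m} \<and> j \<le> r-m+1}. G j r)"
    using assms by (intro sum.cong refl) auto
  also have "\<dots> = (\<Sum>j\<in>{2..p-m}. \<Sum>r\<in>{r. r \<in> {m+1..p-1} \<and> j \<le> r-m+1}. G j r)"
    by (rule sum.swap_restrict) auto
  also have "\<dots> = (\<Sum>j = 2..p-m. \<Sum>q = j+m-1..p-1. G j q)"
    using assms by (intro sum.cong refl) auto
  finally show ?thesis .
qed

lemma Qc_Suc:
  assumes "2 \<le> j"
  shows "Qc T B m (Suc j) s = (\<Sum>q = j + m - 1..s - 1. Qc T B m j q * B q s)"
proof -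
  obtain i where "j = Suc (Suc i)" using assms by (metis add_2_eq_Suc le_Suc_ex)
  then show ?thesis by simp
qed

lemma Qc_series_mult:
  fixes L :: complex
  assumes "m < p" "L \<noteq> 0"
  shows "(\<Sum>r = 2..p-m+1. Qc T B m r p / L ^ r) * L
    = T p / L + (\<Sum>q = m+1..p-1. (\<Sum>j = 2..q-m+1. Qc T B m j q / L ^ j) * B q p)"
proof -
  have "(\<Sum>r = 2..p-m+1. Qc T B m r p / L ^ r) * L
      = Qc T B m 2 p / L ^ 2 * L + (\<Sum>r = Suc 2..Suc (p-m). Qc T B m r p / L ^ r * L)"
    unfolding sum_distrib_right using assms(1) by (subst sum.atLeast_Suc_atMost) auto
  also have "(\<Sum>r = Suc 2..Suc (p-m). Qc T B m r p / L ^ r * L)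
      = (\<Sum>j = 2..p-m. Qc T B m (Suc j) p / L ^ j)"
    using assms(2) by (simp only: sum.shift_bounds_cl_Suc_ivl) simp
  also have "\<dots> = (\<Sum>j = 2..p-m. \<Sum>q = j+m-1..p-1. Qc T B m j q * B q p / L ^ j)"
    by (intro sum.cong refl) (simp add: Qc_Suc sum_divide_distrib)
  also have "\<dots> = (\<Sum>q = m+1..p-1. \<Sum>j = 2..q-m+1. Qc T B m j q * B q p / L ^ j)"
    by (rule sum_triangle_swap[OF assms(1), symmetric])
  also have "\<dots> = (\<Sum>q = m+1..p-1. (\<Sum>j = 2..q-m+1. Qc T B m j q / L ^ j) * B q p)"
    by (simp only: sum_distrib_right times_divide_eq_left)
  also have "Qc T B m 2 p / L ^ 2 * L = T p / L"
    using assms(2) by (simp add: numeral_2_eq_2)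
  finally show ?thesis .
qed

lemma sum_evec_apply:
  assumes "2 \<le> k" "p \<in> {1..n}"
  shows "(\<Sum>j = 1..k. c j * evec m n a j p) = c 1 * aone m p + (\<Sum>j = 2..k. c j * a j p)"
proof -
  have "(\<Sum>j = 1..k. c j * evec m n a j p) = c 1 * evec m n a 1 p + (\<Sum>j = Suc 1..k. c j * evec m n a j p)"
    using assms(1) by (subst sum.atLeast_Suc_atMost) auto
  also have "(\<Sum>j = Suc 1..k. c j * evec m n a j p) = (\<Sum>j = 2..k. c j * a j p)"
    using assms(2) by (intro sum.cong) (auto simp: evec_def)
  finally show ?thesis by (simp add: evec_def)
qed

locale Anm =
  fixes m n :: nat and Ups :: "nat \<Rightarrow> nat \<Rightarrow> nat \<Rightarrow> complex" and us :: "nat \<Rightarrow> nat"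
  assumes m_le_n: "m \<le> n"
    and us_range: "\<forall>s\<in>{m+1..n}. us s \<in> {1..m}"
begin

abbreviation mult :: "(nat \<Rightarrow> complex) \<Rightarrow> (nat \<Rightarrow> complex) \<Rightarrow> nat \<Rightarrow> complex" (infixl "\<cdot>" 70)
  where "a \<cdot> b \<equiv> amult m n Ups us a b"

lemma amult_outside: "p \<notin> {1..n} \<Longrightarrow> (a \<cdot> b) p = 0"
  by (simp add: amult_def sc_def)

lemma amult_low:
  assumes "p \<in> {1..m}"
  shows "(a \<cdot> b) p = a p * b p"
proof -
  have "(a \<cdot> b) p = (\<Sum>rs\<in>{1..n} \<times> {1..n}. a (fst rs) * b (snd rs) * sc m n Ups us (fst rs) (snd rs) p)"
    by (simp add: amult_def sum.cartesian_product case_prod_beta')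
  also have "\<dots> = (\<Sum>rs\<in>{1..n} \<times> {1..n}. if rs = (p, p) then a (fst rs) * b (snd rs) else 0)"
    using assms by (intro sum.cong refl) (auto simp: sc_def)
  also have "\<dots> = a p * b p"
    using assms m_le_n by (subst sum.delta) auto
  finally show ?thesis .
qed

lemma amult_high:
  assumes p: "p \<in> {m+1..n}"
  shows "(a \<cdot> b) p = a (us p) * b p + a p * b (us p)
    + (\<Sum>r = m+1..p-1. \<Sum>s = m+1..p-1. a r * b s * Ups r s p)"
proof -
  have up: "us p \<in> {1..m}" using us_range p by blast
  define H where "H = {m+1..p-1} \<times> {m+1..p-1}"
  define f where "f rs = a (fst rs) * b (snd rs) * sc m n Ups us (fst rs) (snd rs) p" for rs
  have H_sub: "H \<subseteq> {1..n} \<times> {1..n}" using p by (auto simp: H_def)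
  have f_H: "f rs = a (fst rs) * b (snd rs) * Ups (fst rs) (snd rs) p" if "rs \<in> H" for rs
    using that p by (auto simp: f_def H_def sc_def)
  have "(a \<cdot> b) p = (\<Sum>rs\<in>{1..n} \<times> {1..n}. f rs)"
    by (simp add: amult_def f_def sum.cartesian_product case_prod_beta')
  also have "\<dots> = (\<Sum>rs\<in>insert (us p, p) (insert (p, us p) H). f rs)"
    using p up H_sub by (intro sum.mono_neutral_right) (auto simp: f_def H_def sc_def)
  also have "\<dots> = f (us p, p) + f (p, us p) + (\<Sum>rs\<in>H. f rs)"
    using p up by (simp add: H_def)
  also have "f (us p, p) = a (us p) * b p"
    using p up by (auto simp: f_def sc_def)
  also have "f (p, us p) = a p * b (us p)"
    using p up by (auto simp: f_def sc_def)
  also have "(\<Sum>rs\<in>H. f rs) = (\<Sum>r = m+1..p-1. \<Sum>s = m+1..p-1. a r * b s * Ups r s p)"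
    unfolding sum.cartesian_product H_def
    by (rule sum.cong[OF refl]) (simp add: f_H[unfolded H_def] case_prod_beta')
  finally show ?thesis .
qed

end

locale Anm_assoc = Anm +
  assumes amult_assoc:
    "\<And>a b c. amult m n Ups us (amult m n Ups us a b) c = amult m n Ups us a (amult m n Ups us b c)"
begin

text \<open>I_u I_r = 0 for u \<noteq> u_r, so associativity gives
  Upsilon^s_{r,p} I_p = I_{u_p} (I_r I_s) = (I_{u_p} I_r) I_s = 0 on the I_p-coordinate.\<close>

lemma Ups_eq_0_if_us_ne:
  assumes r: "r \<in> {m+1..p-1}" and s: "s \<in> {m+1..p-1}" and p: "p \<in> {m+1..n}"
    and ne: "us r \<noteq> us p"
  shows "Ups r s p = 0"
proof -
  define u where "u = us p"
  have u: "u \<in> {1..m}" using us_range p by (auto simp: u_def)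
  have "u \<noteq> r" "u \<noteq> p" "r \<noteq> p" using u r p by auto
  have r_high: "r \<in> {m+1..n}" using r p by auto
  have "(basisI r \<cdot> basisI s) p
      = (\<Sum>r' = m+1..p-1. basisI r r' * (\<Sum>s' = m+1..p-1. basisI s s' * Ups r' s' p))"
    using s p \<open>u \<noteq> r\<close> \<open>r \<noteq> p\<close>
    by (simp add: amult_high sum_distrib_left mult.assoc u_def)
  also have "\<dots> = Ups r s p"
    using r s by (simp add: sum_basisI_mult)
  finally have rs: "(basisI r \<cdot> basisI s) p = Ups r s p" .
  have idem: "(basisI u \<cdot> y) p = y p" for y
    using u p by (simp add: amult_high mult.assoc sum_basisI_mult u_def)
  have annihilate: "basisI u \<cdot> basisI r = (\<lambda>_. 0)"
  proof
    fix q
    consider "q \<notin> {1..n}" | "q \<in> {1..m}" | "q \<in> {m+1..n}" by fastforce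
    then show "(basisI u \<cdot> basisI r) q = 0"
    proof cases
      case 3
      then show ?thesis
        using u r_high ne by (cases "q = r") (auto simp: amult_high mult.assoc sum_basisI_mult u_def)
    qed (use u r_high in \<open>auto simp: amult_outside amult_low\<close>)
  qed
  have "Ups r s p = ((basisI u \<cdot> basisI r) \<cdot> basisI s) p"
    using rs idem by (simp add: amult_assoc)
  then have "Ups r s p = ((\<lambda>_. 0) \<cdot> basisI s) p"
    by (simp only: annihilate)
  then show ?thesis by (simp add: amult_def)
qed

definition Bcoef :: "(nat \<Rightarrow> complex) \<Rightarrow> nat \<Rightarrow> nat \<Rightarrow> complex" where
  "Bcoef T q s = (\<Sum>p = m+1..s-1. T p * Ups q p s)"

lemma Bcoef_eq_0_if_us_ne:
  assumes "q \<in> {m+1..p-1}" "p \<in> {m+1..n}" "us q \<noteq> us p"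
  shows "Bcoef T q p = 0"
  unfolding Bcoef_def using assms by (simp add: Ups_eq_0_if_us_ne)

lemma amult_eq_aone_if_coordinates:
  fixes d T R w :: "nat \<Rightarrow> complex"
  assumes d_ne: "\<And>u. u \<in> {1..m} \<Longrightarrow> d u \<noteq> 0"
    and w_low: "\<And>u. u \<in> {1..m} \<Longrightarrow> w u = d u"
    and w_high: "\<And>s. s \<in> {m+1..n} \<Longrightarrow> w s = - T s"
    and R_low: "\<And>u. u \<in> {1..m} \<Longrightarrow> R u = 1 / d u"
    and R_high: "\<And>s. s \<in> {m+1..n} \<Longrightarrow>
      R s = (\<Sum>r = 2..s-m+1. Qc T (Bcoef T) m r s / d (us s) ^ r)"
  shows "R \<cdot> w = aone m"
proof
  fix p
  consider "p \<notin> {1..n}" | "p \<in> {1..m}" | "p \<in> {m+1..n}" by fastforce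
  then show "(R \<cdot> w) p = aone m p"
  proof cases
    case 1
    then show ?thesis using m_le_n by (auto simp: amult_outside aone_def)
  next
    case 2
    then show ?thesis using d_ne by (simp add: amult_low R_low w_low aone_def)
  next
    case p: 3
    have up: "us p \<in> {1..m}" using us_range p by blast
    define L where "L = d (us p)"
    define S where "S q = (\<Sum>j = 2..q-m+1. Qc T (Bcoef T) m j q / L ^ j)" for q
    have R_B: "R q * Bcoef T q p = S q * Bcoef T q p" if q: "q \<in> {m+1..p-1}" for q
    proof (cases "us q = us p")
      case True
      have "q \<in> {m+1..n}" using q p by auto
      then show ?thesis using True by (simp add: R_high S_def L_def)
    next
      case False
      then show ?thesis using q p by (simp add: Bcoef_eq_0_if_us_ne)
    qed
    have "(\<Sum>r = m+1..p-1. \<Sum>s = m+1..p-1. R r * w s * Ups r s p)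
        = - (\<Sum>q = m+1..p-1. R q * Bcoef T q p)"
      using p
      by (auto simp: w_high Bcoef_def sum_distrib_left sum_negf[symmetric] intro!: sum.cong)
    also have "\<dots> = - (\<Sum>q = m+1..p-1. S q * Bcoef T q p)"
      using R_B by (metis (no_types, lifting) sum.cong)
    finally have upper: "(\<Sum>r = m+1..p-1. \<Sum>s = m+1..p-1. R r * w s * Ups r s p)
        = - (\<Sum>q = m+1..p-1. S q * Bcoef T q p)" .
    have "(R \<cdot> w) p = - (T p / L) + R p * L - (\<Sum>q = m+1..p-1. S q * Bcoef T q p)"
      unfolding amult_high[OF p] upper using R_low[OF up] w_low[OF up] w_high[OF p]
      by (simp add: L_def)
    also have "\<dots> = 0"
      using Qc_series_mult[of m p L T "Bcoef T"] p d_ne[OF up]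
      by (simp add: R_high[OF p] L_def S_def)
    finally show ?thesis using p by (simp add: aone_def)
  qed
qed

end

theorem lemma1:
  fixes m n k :: nat
    and Ups :: "nat \<Rightarrow> nat \<Rightarrow> nat \<Rightarrow> complex"
    and us :: "nat \<Rightarrow> nat"
    and a :: "nat \<Rightarrow> nat \<Rightarrow> complex"
    and x :: "nat \<Rightarrow> real"
    and t :: complex
  assumes mn: "1 \<le> m" "m \<le> n"
    and us_range: "\<forall>s\<in>{m+1..n}. us s \<in> {1..m}"
    and comm: "\<forall>a b. amult m n Ups us a b = amult m n Ups us b a"
    and assoc: "\<forall>a b c. amult m n Ups us (amult m n Ups us a b) c
                      = amult m n Ups us a (amult m n Ups us b c)"
    and k_bounds: "2 \<le> k" "k \<le> 2 * n"
    and lin_indep: "\<forall>c :: nat \<Rightarrow> real.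
        (\<forall>r. (\<Sum>j = 1..k. complex_of_real (c j) * evec m n a j r) = 0)
          \<longrightarrow> (\<forall>j\<in>{1..k}. c j = 0)"
    and t_ne: "\<forall>u\<in>{1..m}. t \<noteq> complex_of_real (x 1) + (\<Sum>j = 2..k. complex_of_real (x j) * a j u)"
  shows
    "let \<zeta> = (\<lambda>r. \<Sum>j = 1..k. complex_of_real (x j) * evec m n a j r);
         \<xi> = (\<lambda>u. complex_of_real (x 1) + (\<Sum>j = 2..k. complex_of_real (x j) * a j u));
         T = (\<lambda>s. \<Sum>j = 2..k. complex_of_real (x j) * a j s);
         B = (\<lambda>q s. \<Sum>p = m + 1..s - 1. T p * Ups q p s);
         w = (\<lambda>r. t * evec m n a 1 r - \<zeta> r);
         R = (\<lambda>p. (\<Sum>u = 1..m. 1 / (t - \<xi> u) * basisI u p)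
           + (\<Sum>s = m + 1..n. \<Sum>r = 2..s - m + 1.
                Qc T B m r s / (t - \<xi> (us s)) ^ r * basisI s p))
     in (\<exists>y. amult m n Ups us w y = aone m \<and> amult m n Ups us y w = aone m)
        \<and> amult m n Ups us w R = aone m \<and> amult m n Ups us R w = aone m"
proof -
  interpret Anm_assoc m n Ups us
    using mn(2) us_range assoc by unfold_locales auto
  define \<xi> where "\<xi> = (\<lambda>u. complex_of_real (x 1) + (\<Sum>j = 2..k. complex_of_real (x j) * a j u))"
  define T where "T = (\<lambda>s. \<Sum>j = 2..k. complex_of_real (x j) * a j s)"
  define w where "w = (\<lambda>r. t * evec m n a 1 r - (\<Sum>j = 1..k. complex_of_real (x j) * evec m n a j r))"
  define B where "B = (\<lambda>q s. \<Sum>p = m + 1..s - 1. T p * Ups q p s)"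
  define R where "R = (\<lambda>p. (\<Sum>u = 1..m. 1 / (t - \<xi> u) * basisI u p)
    + (\<Sum>s = m + 1..n. \<Sum>r = 2..s - m + 1. Qc T B m r s / (t - \<xi> (us s)) ^ r * basisI s p))"
  have B_eq: "B = Bcoef T"
    by (simp add: B_def Bcoef_def fun_eq_iff)
  have w_apply: "w p = t * aone m p - complex_of_real (x 1) * aone m p - T p" if "p \<in> {1..n}" for p
    using sum_evec_apply[OF k_bounds(1) that] by (simp add: w_def T_def evec_def)
  have right_inverse: "R \<cdot> w = aone m"
  proof (rule amult_eq_aone_if_coordinates)
    show "t - \<xi> u \<noteq> 0" if "u \<in> {1..m}" for u
      using t_ne that by (simp add: \<xi>_def)
    show "w u = t - \<xi> u" if "u \<in> {1..m}" for u
      using that mn(2) w_apply[of u] by (simp add: aone_def \<xi>_def T_def)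
    show "w s = - T s" if "s \<in> {m+1..n}" for s
      using that w_apply[of s] by (simp add: aone_def)
    show "R u = 1 / (t - \<xi> u)" if "u \<in> {1..m}" for u
      using that by (simp only: R_def sum_mult_basisI finite_atLeastAtMost) auto
    show "R s = (\<Sum>r = 2..s-m+1. Qc T (Bcoef T) m r s / (t - \<xi> (us s)) ^ r)" if "s \<in> {m+1..n}" for s
      using that
      by (simp only: R_def B_eq sum_distrib_right[symmetric] sum_mult_basisI finite_atLeastAtMost) auto
  qed
  moreover from right_inverse comm have "w \<cdot> R = aone m" by metis
  ultimately show ?thesis
    unfolding Let_def \<xi>_def T_def B_def w_def R_def by blast
qed

end
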